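(* Let $f=\frac1n\sum_{z=1}^nf_z$ where each $\nabla f_z$ is $L$-Lipschitz and $\|\nabla f_z(x)\|\le l$ for all $x$ and $z$. In an SCSG inner loop (see context) with $b\ge1$, $n\ge8b$ and $\eta L=\gamma(b/n)^{2/3}$, $\gamma\le\frac13$, each iteration satisfies $$\mathbb{E}[f(x_t)-f(x_{t-1})]\le\frac{5l^2\gamma^2}{L}\left(\frac bn\right)^{4/3}.$$
   Context: SCSG inner loop with snapshot $\tilde x$: $\tilde\mu=\nabla f(\tilde x)$, $x_0=\tilde x$, and $x_t=x_{t-1}-\eta(\nabla f_{I_t}(x_{t-1})-\nabla f_{I_t}(\tilde x)+\tilde\mu)$, where $I_t\subset[n]$ is a uniformly random subset of size $b$ and $\nabla f_I=\frac1{|I|}\sum_{i\in I}\nabla f_i$. *)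

theory Defs
  imports "HOL-Analysis.Analysis" "HOL-Probability.Probability"
begin

definition batch_grad :: "(nat \<Rightarrow> 'a \<Rightarrow> 'a::real_vector) \<Rightarrow> nat set \<Rightarrow> 'a \<Rightarrow> 'a" where
  "batch_grad g I x = (1 / real (card I)) *\<^sub>R (\<Sum>i\<in>I. g i x)"

definition batches :: "nat \<Rightarrow> nat \<Rightarrow> nat set set" where
  "batches n b = {I. I \<subseteq> {1..n} \<and> card I = b}"

text \<open>SCSG inner loop: starting from the snapshot xt, apply the steps given by the
  list of batches Is = [I_1, ..., I_k]; the result is x_k.  mu is the snapshot gradient.\<close>
definition scsg_iter :: "(nat \<Rightarrow> 'a \<Rightarrow> 'a::real_vector) \<Rightarrow> real \<Rightarrow> 'a \<Rightarrow> 'a \<Rightarrow> nat set list \<Rightarrow> 'a" where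
  "scsg_iter g \<eta> mu xt Is =
     foldl (\<lambda>x I. x - \<eta> *\<^sub>R (batch_grad g I x - batch_grad g I xt + mu)) xt Is"

end

theory Submission
  imports Defs
begin

text \<open>
  Write \<open>v\<^sub>I(y) = \<nabla>f\<^sub>I(y) - \<nabla>f\<^sub>I(x\<^sub>s) + \<nabla>f(x\<^sub>s)\<close> for the step direction, so that
  \<open>x\<^sub>t = x\<^sub>t\<^sub>-\<^sub>1 - \<eta> v\<^sub>I\<^sub>t(x\<^sub>t\<^sub>-\<^sub>1)\<close>.  By the descent lemma for the \<open>L\<close>-smooth function \<open>f\<close>,
  \<open>f(x\<^sub>t) - f(x\<^sub>t\<^sub>-\<^sub>1) \<le> -\<eta> \<langle>\<nabla>f(x\<^sub>t\<^sub>-\<^sub>1), v\<^sub>I\<^sub>t(x\<^sub>t\<^sub>-\<^sub>1)\<rangle> + L\<eta>\<^sup>2/2 \<parallel>v\<^sub>I\<^sub>t(x\<^sub>t\<^sub>-\<^sub>1)\<parallel>\<^sup>2\<close>.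
  Averaging over the last batch with the earlier ones fixed, \<open>v\<^sub>I(y)\<close> is an unbiased
  estimate of \<open>\<nabla>f(y)\<close>, so the linear term contributes \<open>-\<eta>\<parallel>\<nabla>f(y)\<parallel>\<^sup>2 \<le> 0\<close>, while
  \<open>\<parallel>v\<^sub>I\<parallel> \<le> 3l\<close>.  Hence the expected increase is at most
  \<open>9/2 L\<eta>\<^sup>2l\<^sup>2 = 9/2 l\<^sup>2\<gamma>\<^sup>2/L (b/n)\<^sup>4\<^sup>/\<^sup>3\<close>.
\<close>

lemma descent_lemma:
  fixes F :: "'a::real_inner \<Rightarrow> real" and G :: "'a \<Rightarrow> 'a"
  assumes grad: "\<And>x. GDERIV F x :> G x"
    and lip: "\<And>x y. norm (G x - G y) \<le> L * norm (x - y)"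
  shows "F y \<le> F x + inner (G x) (y - x) + L / 2 * norm (y - x)^2"
proof -
  define d where "d = y - x"
  define \<phi> where "\<phi> s = F (x + s *\<^sub>R d) - s * inner (G x) d - L / 2 * s^2 * norm d^2" for s
  have \<phi>_deriv: "DERIV \<phi> s :> inner d (G (x + s *\<^sub>R d)) - inner (G x) d - L * s * norm d^2" for s
  proof -
    have "((\<lambda>s. x + s *\<^sub>R d) has_derivative (\<lambda>h. h *\<^sub>R d)) (at s)"
      by (auto intro!: derivative_eq_intros)
    from has_derivative_compose[OF this grad[unfolded gderiv_def]]
    have "DERIV (\<lambda>s. F (x + s *\<^sub>R d)) s :> inner d (G (x + s *\<^sub>R d))"
      by (simp add: has_field_derivative_def mult_commute_abs)
    then show ?thesis
      unfolding \<phi>_def by (auto intro!: derivative_eq_intros)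
  qed
  have "\<phi> 1 \<le> \<phi> 0"
  proof (rule DERIV_nonpos_imp_nonincreasing[of 0 1 \<phi>])
    fix s :: real
    assume s: "0 \<le> s" "s \<le> 1"
    have "inner d (G (x + s *\<^sub>R d) - G x) \<le> norm d * norm (G (x + s *\<^sub>R d) - G x)"
      by (rule norm_cauchy_schwarz)
    also have "\<dots> \<le> norm d * (L * norm (s *\<^sub>R d))"
      using lip[of "x + s *\<^sub>R d" x] by (simp add: mult_left_mono)
    also have "\<dots> = L * s * norm d^2"
      using s by (simp add: power2_eq_square)
    finally have "inner d (G (x + s *\<^sub>R d)) - inner (G x) d - L * s * norm d^2 \<le> 0"
      by (simp add: inner_diff_right inner_commute)
    then show "\<exists>D. DERIV \<phi> s :> D \<and> D \<le> 0"
      using \<phi>_deriv by blast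
  qed simp
  then show ?thesis
    unfolding \<phi>_def d_def by simp
qed

text \<open>
  Averaged over finitely many steps \<open>y - \<eta> v\<^sub>I\<close> whose directions have mean \<open>\<nabla>F(y)\<close>,
  the first-order term of the descent lemma is \<open>-\<eta>\<parallel>\<nabla>F(y)\<parallel>\<^sup>2\<close> and can be dropped.
\<close>
lemma sum_descent_unbiased_le:
  fixes F :: "'a::real_inner \<Rightarrow> real" and G :: "'a \<Rightarrow> 'a"
  assumes grad: "\<And>x. GDERIV F x :> G x"
    and lip: "\<And>x y. norm (G x - G y) \<le> L * norm (x - y)"
    and unbiased: "(\<Sum>I\<in>B. v I) = real (card B) *\<^sub>R G y"
    and bounded: "\<And>I. I \<in> B \<Longrightarrow> norm (v I) \<le> V"
    and "\<eta> \<ge> 0" "L \<ge> 0"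
  shows "(\<Sum>I\<in>B. F (y - \<eta> *\<^sub>R v I) - F y) \<le> real (card B) * (L / 2 * \<eta>^2 * V^2)"
proof -
  have step: "F (y - \<eta> *\<^sub>R v I) - F y \<le> - \<eta> * inner (G y) (v I) + L / 2 * \<eta>^2 * V^2"
    if "I \<in> B" for I
  proof -
    have "F (y - \<eta> *\<^sub>R v I) \<le> F y - \<eta> * inner (G y) (v I) + L / 2 * \<eta>^2 * norm (v I)^2"
      using descent_lemma[OF grad lip, of "y - \<eta> *\<^sub>R v I" y] \<open>\<eta> \<ge> 0\<close>
      by (simp add: power_mult_distrib)
    moreover have "norm (v I)^2 \<le> V^2"
      using bounded[OF that] by (meson norm_ge_zero power_mono)
    then have "L / 2 * \<eta>^2 * norm (v I)^2 \<le> L / 2 * \<eta>^2 * V^2"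
      using \<open>L \<ge> 0\<close> by (simp add: mult_left_mono)
    ultimately show ?thesis by linarith
  qed
  have "(\<Sum>I\<in>B. F (y - \<eta> *\<^sub>R v I) - F y)
      \<le> (\<Sum>I\<in>B. - \<eta> * inner (G y) (v I) + L / 2 * \<eta>^2 * V^2)"
    by (rule sum_mono) (rule step)
  also have "\<dots> = - \<eta> * inner (G y) (\<Sum>I\<in>B. v I) + real (card B) * (L / 2 * \<eta>^2 * V^2)"
    unfolding sum.distrib sum_constant inner_sum_right sum_distrib_left mult_minus_left sum_negf
    by simp
  also have "\<dots> = - \<eta> * real (card B) * norm (G y)^2 + real (card B) * (L / 2 * \<eta>^2 * V^2)"
    by (simp add: unbiased power2_norm_eq_inner)
  also have "\<dots> \<le> real (card B) * (L / 2 * \<eta>^2 * V^2)"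
    using \<open>\<eta> \<ge> 0\<close> by simp
  finally show ?thesis .
qed

lemma GDERIV_scaled_sum:
  assumes "\<And>z. z \<in> Z \<Longrightarrow> GDERIV (f z) x :> D z"
  shows "GDERIV (\<lambda>x. c * (\<Sum>z\<in>Z. f z x)) x :> c *\<^sub>R (\<Sum>z\<in>Z. D z)"
proof -
  have "((\<lambda>x. \<Sum>z\<in>Z. f z x) has_derivative (\<lambda>h. \<Sum>z\<in>Z. inner h (D z))) (at x)"
    by (rule has_derivative_sum) (use assms in \<open>simp add: gderiv_def\<close>)
  then have "((\<lambda>x. c * (\<Sum>z\<in>Z. f z x)) has_derivative (\<lambda>h. c * (\<Sum>z\<in>Z. inner h (D z)))) (at x)"
    by (rule has_derivative_mult_right)
  then show ?thesis
    by (simp add: gderiv_def inner_sum_right)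
qed

lemma batch_grad_lipschitz:
  fixes g :: "nat \<Rightarrow> 'a \<Rightarrow> 'a::real_normed_vector"
  assumes lip: "\<And>z. z \<in> I \<Longrightarrow> norm (g z x - g z y) \<le> L * norm (x - y)" and "L \<ge> 0"
  shows "norm (batch_grad g I x - batch_grad g I y) \<le> L * norm (x - y)"
proof (cases "card I = 0")
  case True
  then show ?thesis
    using \<open>L \<ge> 0\<close> by (simp add: batch_grad_def)
next
  case False
  have "norm (\<Sum>z\<in>I. g z x - g z y) \<le> real (card I) * (L * norm (x - y))"
    using sum_norm_le[of I "\<lambda>z. g z x - g z y", OF lip] by simp
  moreover have "batch_grad g I x - batch_grad g I y = (1 / real (card I)) *\<^sub>R (\<Sum>z\<in>I. g z x - g z y)"
    by (simp add: batch_grad_def sum_subtractf scaleR_diff_right)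
  ultimately show ?thesis
    using False by (simp add: field_simps)
qed

lemma norm_batch_grad_le:
  fixes g :: "nat \<Rightarrow> 'a \<Rightarrow> 'a::real_normed_vector"
  assumes bnd: "\<And>z. z \<in> I \<Longrightarrow> norm (g z x) \<le> l" and "card I \<noteq> 0"
  shows "norm (batch_grad g I x) \<le> l"
proof -
  have "norm (\<Sum>z\<in>I. g z x) \<le> real (card I) * l"
    using sum_norm_le[of I "\<lambda>z. g z x", OF bnd] by simp
  then show ?thesis
    using \<open>card I \<noteq> 0\<close> by (simp add: batch_grad_def field_simps)
qed

lemma finite_batches: "finite (batches n b)"
  unfolding batches_def by (rule finite_subset[of _ "Pow {1..n}"]) auto

lemma card_batches: "card (batches n b) = n choose b"
  unfolding batches_def using n_subsets[of "{1..n}" b] by simp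

lemma card_batches_containing:
  assumes i: "i \<in> {1..n}" and "b \<ge> 1"
  shows "card {I \<in> batches n b. i \<in> I} = (n - 1) choose (b - 1)"
proof -
  let ?J = "{J. J \<subseteq> {1..n} - {i} \<and> card J = b - 1}"
  have "{I \<in> batches n b. i \<in> I} = insert i ` ?J"
  proof (intro set_eqI iffI)
    fix I
    assume I: "I \<in> {I \<in> batches n b. i \<in> I}"
    then have "finite I"
      unfolding batches_def using finite_subset by blast
    with I have "I = insert i (I - {i})" "I - {i} \<in> ?J"
      by (auto simp: batches_def)
    then show "I \<in> insert i ` ?J" by blast
  next
    fix I
    assume "I \<in> insert i ` ?J"
    then obtain J where J: "J \<subseteq> {1..n} - {i}" "card J = b - 1" "I = insert i J" by blast
    then have "finite J" using finite_subset by blast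
    with J i \<open>b \<ge> 1\<close> show "I \<in> {I \<in> batches n b. i \<in> I}"
      by (auto simp: batches_def card_insert_if)
  qed
  moreover have "inj_on (insert i) ?J"
    by (rule inj_onI) blast
  ultimately have "card {I \<in> batches n b. i \<in> I} = card ?J"
    by (simp add: card_image)
  also have "\<dots> = (n - 1) choose (b - 1)"
    using n_subsets[of "{1..n} - {i}" "b - 1"] i by simp
  finally show ?thesis .
qed

lemma sum_batch_grad:
  fixes g :: "nat \<Rightarrow> 'a \<Rightarrow> 'a::real_vector"
  assumes "b \<ge> 1"
  shows "(\<Sum>I\<in>batches n b. batch_grad g I y) = real (card (batches n b)) *\<^sub>R batch_grad g {1..n} y"
proof -
  have "(\<Sum>I\<in>batches n b. batch_grad g I y)
      = (\<Sum>I\<in>batches n b. (1 / real b) *\<^sub>R (\<Sum>i\<in>{i\<in>{1..n}. i \<in> I}. g i y))"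
  proof (rule sum.cong)
    fix I
    assume "I \<in> batches n b"
    then have "card I = b" "{i\<in>{1..n}. i \<in> I} = I"
      by (auto simp: batches_def)
    then show "batch_grad g I y = (1 / real b) *\<^sub>R (\<Sum>i\<in>{i\<in>{1..n}. i \<in> I}. g i y)"
      by (simp add: batch_grad_def)
  qed simp
  also have "\<dots> = (1 / real b) *\<^sub>R (\<Sum>I\<in>batches n b. \<Sum>i\<in>{i\<in>{1..n}. i \<in> I}. g i y)"
    by (simp only: scaleR_sum_right)
  also have "(\<Sum>I\<in>batches n b. \<Sum>i\<in>{i\<in>{1..n}. i \<in> I}. g i y)
      = (\<Sum>i\<in>{1..n}. \<Sum>I\<in>{I\<in>batches n b. i \<in> I}. g i y)"
    by (rule sum.swap_restrict) (auto simp: finite_batches)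
  also have "\<dots> = (\<Sum>i\<in>{1..n}. real ((n - 1) choose (b - 1)) *\<^sub>R g i y)"
    using card_batches_containing[OF _ \<open>b \<ge> 1\<close>] by (simp add: sum_constant_scaleR)
  also have "(1 / real b) *\<^sub>R \<dots> = real (card (batches n b)) *\<^sub>R batch_grad g {1..n} y"
  proof (cases "n = 0")
    case False
    have "real b * real (n choose b) = real n * real ((n - 1) choose (b - 1))"
      using times_binomial_minus1_eq[of b n] \<open>b \<ge> 1\<close> by (metis of_nat_mult less_le_trans zero_less_one)
    then have "(1 / real b) * real ((n - 1) choose (b - 1)) = real (n choose b) * (1 / real n)"
      using \<open>b \<ge> 1\<close> False by (simp add: field_simps)
    then show ?thesis
      by (simp add: card_batches batch_grad_def scaleR_sum_right[symmetric] scaleR_scaleR)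
  qed (simp add: batch_grad_def)
  finally show ?thesis .
qed

lemma scsg_iter_snoc:
  "scsg_iter g \<eta> mu xt (Is @ [I]) =
     scsg_iter g \<eta> mu xt Is
       - \<eta> *\<^sub>R (batch_grad g I (scsg_iter g \<eta> mu xt Is) - batch_grad g I xt + mu)"
  by (simp add: scsg_iter_def)

lemma sum_lists_length_Suc:
  assumes "finite B"
  shows "(\<Sum>Is | length Is = Suc k \<and> set Is \<subseteq> B. H Is)
       = (\<Sum>p | set p \<subseteq> B \<and> length p = k. \<Sum>I\<in>B. H (p @ [I]))"
proof -
  let ?P = "{p. set p \<subseteq> B \<and> length p = k}"
  let ?snoc = "\<lambda>(p, I). p @ [I]"
  have "{Is. length Is = Suc k \<and> set Is \<subseteq> B} = ?snoc ` (?P \<times> B)"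
  proof (intro set_eqI iffI)
    fix Is
    assume "Is \<in> {Is. length Is = Suc k \<and> set Is \<subseteq> B}"
    then have Is: "Is \<noteq> []" "set Is \<subseteq> B" "length Is = Suc k"
      by auto
    then have "butlast Is \<in> ?P" "last Is \<in> B"
      by (auto dest: in_set_butlastD)
    moreover have "Is = butlast Is @ [last Is]"
      using Is by simp
    ultimately show "Is \<in> ?snoc ` (?P \<times> B)"
      by force
  qed auto
  moreover have "inj_on ?snoc (?P \<times> B)"
    by (rule inj_onI) auto
  ultimately have "(\<Sum>Is | length Is = Suc k \<and> set Is \<subseteq> B. H Is) = (\<Sum>(p, I)\<in>?P \<times> B. H (p @ [I]))"
    by (simp add: sum.reindex case_prod_beta')
  also have "\<dots> = (\<Sum>p\<in>?P. \<Sum>I\<in>B. H (p @ [I]))"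
    by (rule sum.cartesian_product[symmetric])
  finally show ?thesis .
qed

text \<open>
  Drawing a uniform sequence of \<open>k + 1\<close> elements of \<open>B\<close> is drawing its first \<open>k\<close>
  and then an independent uniform last one, so it suffices to bound the average over the last.
\<close>
lemma expectation_lists_snoc_le:
  assumes "finite B" "B \<noteq> {}"
    and last_step: "\<And>p. set p \<subseteq> B \<Longrightarrow> length p = k \<Longrightarrow> (\<Sum>I\<in>B. H (p @ [I])) \<le> real (card B) * C"
  shows "measure_pmf.expectation (pmf_of_set {Is. length Is = Suc k \<and> set Is \<subseteq> B}) H \<le> C"
proof -
  let ?S = "{Is. length Is = Suc k \<and> set Is \<subseteq> B}"
  have "?S = {Is. set Is \<subseteq> B \<and> length Is = Suc k}" by blast
  then have card_S: "card ?S = card B ^ Suc k"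
    using card_lists_length_eq[OF \<open>finite B\<close>] by simp
  then have "card ?S > 0"
    using assms by (simp add: card_gt_0_iff)
  then have "finite ?S" "?S \<noteq> {}"
    using card_gt_0_iff by blast+
  have "sum H ?S \<le> (\<Sum>p | set p \<subseteq> B \<and> length p = k. real (card B) * C)"
    unfolding sum_lists_length_Suc[OF \<open>finite B\<close>] by (rule sum_mono) (use last_step in auto)
  also have "\<dots> = real (card ?S) * C"
    unfolding card_S using card_lists_length_eq[OF \<open>finite B\<close>] by simp
  finally show ?thesis
    using \<open>card ?S > 0\<close>
    by (simp add: integral_pmf_of_set[OF \<open>?S \<noteq> {}\<close> \<open>finite ?S\<close>] pos_divide_le_eq mult.commute)
qed

lemma sum_scsg_direction:
  fixes g :: "nat \<Rightarrow> 'a \<Rightarrow> 'a::real_vector"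
  assumes "b \<ge> 1"
  shows "(\<Sum>I\<in>batches n b. batch_grad g I y - batch_grad g I x + batch_grad g {1..n} x)
       = real (card (batches n b)) *\<^sub>R batch_grad g {1..n} y"
  using sum_batch_grad[OF assms, of g] by (simp add: sum.distrib sum_subtractf sum_constant_scaleR)

lemma norm_scsg_direction_le:
  fixes g :: "nat \<Rightarrow> 'a \<Rightarrow> 'a::real_normed_vector"
  assumes bnd: "\<And>z x. z \<in> {1..n} \<Longrightarrow> norm (g z x) \<le> l"
    and I: "I \<in> batches n b" and "b \<ge> 1"
  shows "norm (batch_grad g I y - batch_grad g I x + batch_grad g {1..n} x) \<le> 3 * l"
proof -
  have "I \<subseteq> {1..n}" "card I \<noteq> 0"
    using I \<open>b \<ge> 1\<close> by (auto simp: batches_def)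
  then have "card {1..n} \<noteq> 0"
    by (metis card_mono finite_atLeastAtMost le_zero_eq)
  have "norm (batch_grad g I y) \<le> l" "norm (batch_grad g I x) \<le> l"
    using norm_batch_grad_le[OF _ \<open>card I \<noteq> 0\<close>] bnd \<open>I \<subseteq> {1..n}\<close> by blast+
  moreover have "norm (batch_grad g {1..n} x) \<le> l"
    using norm_batch_grad_le[OF _ \<open>card {1..n} \<noteq> 0\<close>] bnd by blast
  moreover have "norm (batch_grad g I y - batch_grad g I x + batch_grad g {1..n} x)
      \<le> norm (batch_grad g I y) + norm (batch_grad g I x) + norm (batch_grad g {1..n} x)"
    by (meson add_mono_thms_linordered_semiring(3) norm_triangle_ineq norm_triangle_ineq4 order_trans)
  ultimately show ?thesis
    by linarith
qed

theorem lemma23: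
  fixes fz :: "nat \<Rightarrow> 'a::euclidean_space \<Rightarrow> real"
    and g :: "nat \<Rightarrow> 'a \<Rightarrow> 'a"
    and n b t :: nat and L l \<eta> \<gamma> :: real and xt :: 'a
  assumes grad: "\<And>z x. z \<in> {1..n} \<Longrightarrow> GDERIV (fz z) x :> g z x"
    and lip: "\<And>z x y. z \<in> {1..n} \<Longrightarrow> norm (g z x - g z y) \<le> L * norm (x - y)"
    and bnd: "\<And>z x. z \<in> {1..n} \<Longrightarrow> norm (g z x) \<le> l"
    and L_pos: "L > 0"
    and b: "b \<ge> 1" and nb: "real n \<ge> 8 * real b"
    and step: "\<eta> * L = \<gamma> * (real b / real n) powr (2/3)"
    and gamma_pos: "\<gamma> > 0" and gamma_le: "\<gamma> \<le> 1/3"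
    and t: "t \<ge> 1"
  shows
    "(let f = (\<lambda>x. (1 / real n) * (\<Sum>z=1..n. fz z x));
          mu = (1 / real n) *\<^sub>R (\<Sum>z=1..n. g z xt);
          X = scsg_iter g \<eta> mu xt
      in measure_pmf.expectation
           (pmf_of_set {Is. length Is = t \<and> set Is \<subseteq> batches n b})
           (\<lambda>Is. f (X Is) - f (X (butlast Is))))
     \<le> 5 * l^2 * \<gamma>^2 / L * (real b / real n) powr (4/3)"
proof -
  define f where "f = (\<lambda>x. (1 / real n) * (\<Sum>z=1..n. fz z x))"
  define G where "G = batch_grad g {1..n}"
  define X where "X = scsg_iter g \<eta> (G xt) xt"
  define C where "C = L / 2 * \<eta>^2 * (3 * l)^2"
  have "b \<le> n" and "n > 0"
    using nb b by linarith+
  have mu: "(1 / real n) *\<^sub>R (\<Sum>z=1..n. g z xt) = G xt"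
    by (simp add: G_def batch_grad_def)
  have grad_f: "GDERIV f x :> G x" for x
    using GDERIV_scaled_sum[of "{1..n}" fz x "\<lambda>z. g z x" "1 / real n"] grad
    by (simp add: f_def G_def batch_grad_def)
  have lip_G: "norm (G x - G y) \<le> L * norm (x - y)" for x y
    unfolding G_def by (rule batch_grad_lipschitz) (use lip L_pos in auto)
  have "\<eta> * L > 0"
    using step gamma_pos \<open>n > 0\<close> b by simp
  then have "\<eta> \<ge> 0"
    using L_pos by (simp add: zero_less_mult_iff)
  have last_step: "(\<Sum>I\<in>batches n b. f (X (p @ [I])) - f (X p)) \<le> real (card (batches n b)) * C" for p
    unfolding X_def scsg_iter_snoc C_def
    by (rule sum_descent_unbiased_le[OF grad_f lip_G])
      (use sum_scsg_direction[OF b] norm_scsg_direction_le[OF bnd _ b] \<open>\<eta> \<ge> 0\<close> L_pos in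
        \<open>auto simp: G_def\<close>)
  obtain k where k: "t = Suc k"
    using t by (cases t) auto
  have "batches n b \<noteq> {}"
    using \<open>b \<le> n\<close> card_batches[of n b] by force
  then have "measure_pmf.expectation (pmf_of_set {Is. length Is = t \<and> set Is \<subseteq> batches n b})
      (\<lambda>Is. f (X Is) - f (X (butlast Is))) \<le> C"
    unfolding k by (rule expectation_lists_snoc_le[OF finite_batches]) (use last_step in simp)
  also have "C = 9/2 * l^2 * (\<eta> * L)^2 / L"
    using L_pos by (simp add: C_def power2_eq_square)
  also have "\<dots> = 9/2 * l^2 * \<gamma>^2 / L * (real b / real n) powr (4/3)"
    by (simp add: step power_mult_distrib power2_eq_square powr_add[symmetric])
  also have "\<dots> \<le> 5 * l^2 * \<gamma>^2 / L * (real b / real n) powr (4/3)"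
    using L_pos by (intro mult_right_mono divide_right_mono) auto
  finally show ?thesis
    unfolding Let_def mu f_def X_def .
qed

end
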